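(* Let $k>0$ be real, let $M=\begin{bmatrix} k-1 & k-1 & k\\ 1&0&0\\ 0&1&0\end{bmatrix}$ and $N_0=\begin{bmatrix} k-1 & 2k & 2k\\ 2 & 1-k & 2\\ \frac{2}{k} & \frac{2}{k} & -\frac{1}{k}(k^2+k-2)\end{bmatrix}$. For integers $n\ge1$ put $\mathbf{J}_n=M^n$ and $\mathbf{j}_n=N_0M^n$. Then for all integers $m,n\ge1$: $$\mathbf{j}_{m+n}=\mathbf{j}_m\mathbf{J}_n=\mathbf{J}_m\mathbf{j}_n.$$ *)

theory Defs
  imports "HOL-Analysis.Analysis"
begin

fun matpow :: "real^'n^'n \<Rightarrow> nat \<Rightarrow> real^'n^'n" where
  "matpow A 0 = mat 1"
| "matpow A (Suc n) = matpow A n ** A"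

definition mat3 :: "real \<Rightarrow> real \<Rightarrow> real \<Rightarrow> real \<Rightarrow> real \<Rightarrow> real \<Rightarrow> real \<Rightarrow> real \<Rightarrow> real \<Rightarrow> real^3^3" where
  "mat3 a11 a12 a13 a21 a22 a23 a31 a32 a33 =
     vector [vector [a11, a12, a13], vector [a21, a22, a23], vector [a31, a32, a33]]"

definition Mk :: "real \<Rightarrow> real^3^3" where
  "Mk k = mat3 (k - 1) (k - 1) k  1 0 0  0 1 0"

definition N0k :: "real \<Rightarrow> real^3^3" where
  "N0k k = mat3 (k - 1) (2*k) (2*k)  2 (1 - k) 2  (2/k) (2/k) (-(1/k) * (k^2 + k - 2))"

definition Jbig :: "real \<Rightarrow> nat \<Rightarrow> real^3^3" where
  "Jbig k n = matpow (Mk k) n"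

definition jsmall :: "real \<Rightarrow> nat \<Rightarrow> real^3^3" where
  "jsmall k n = N0k k ** matpow (Mk k) n"

end

theory Submission
  imports Defs
begin

text \<open>Both identities reduce to the fact that \<open>N\<^sub>0\<close> commutes with \<open>M\<close>, a direct
  computation with the entries (valid for every \<open>k \<noteq> 0\<close>). Then \<open>N\<^sub>0\<close> commutes with every
  power of \<open>M\<close>, and \<open>j\<^bsub>m+n\<^esub> = N\<^sub>0 M\<^sup>m M\<^sup>n\<close> can be regrouped either way.\<close>

lemma matpow_add: "matpow A (m + n) = matpow A m ** matpow A n"
  by (induction n) (simp_all add: matrix_mul_assoc)

lemma matpow_commute:
  assumes "A ** B = B ** A"
  shows "matpow A n ** B = B ** matpow A n"
proof (induction n)
  case 0
  then show ?case by simp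
next
  case (Suc n)
  have "matpow A (Suc n) ** B = matpow A n ** (A ** B)"
    by (simp add: matrix_mul_assoc)
  also have "\<dots> = (matpow A n ** B) ** A"
    using assms by (simp add: matrix_mul_assoc)
  also have "\<dots> = B ** matpow A (Suc n)"
    using Suc by (simp add: matrix_mul_assoc)
  finally show ?case .
qed

lemma Mk_N0k_commute:
  assumes "k \<noteq> 0"
  shows "Mk k ** N0k k = N0k k ** Mk k"
  using assms unfolding Mk_def N0k_def mat3_def
  by (simp add: vec_eq_iff forall_3 matrix_matrix_mult_def sum_3 field_simps power2_eq_square)

theorem mainTheorem7:
  fixes k :: real and m n :: nat
  assumes "k > 0" and "m \<ge> 1" and "n \<ge> 1"
  shows "jsmall k (m + n) = jsmall k m ** Jbig k n
       \<and> jsmall k (m + n) = Jbig k m ** jsmall k n"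
proof -
  have "matpow (Mk k) m ** N0k k = N0k k ** matpow (Mk k) m"
    using Mk_N0k_commute \<open>k > 0\<close> by (simp add: matpow_commute)
  then show ?thesis
    unfolding jsmall_def Jbig_def matpow_add by (simp add: matrix_mul_assoc)
qed

end
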